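(* Let $V$ be a finite nonempty set, $c\in\mathbb{R}^{P_V}$, $\hat x$ a maximally specific partial function on $P_V$, $U\subseteq V$, $\hat x'=\hat x|_{P_U}$, $c'=c|_{P_U}$, and $ij\in P_V\setminus\operatorname{dom}(\hat x)$. Define $y^+\in\{0,1\}^{P_U}$ by $y^+_e=1$ if $e\notin\operatorname{dom}(\hat x')$ and $c_e\ge0$; $y^+_e=0$ if $e\notin\operatorname{dom}(\hat x')$ and $c_e<0$; $y^+_e=\hat x_e$ if $e\in\operatorname{dom}(\hat x')$. Let $\tau\in\{\tau^{y^+}_{\mathrm{out}},\tau^{y^+}_{\mathrm{in}},\tau^{y^+}_{\mathrm{bd}}\}$ with corresponding sets $P'_{01},P'_{10}$ given in the context (with $y=y^+$). If $y^+\in X_U[\hat x']$, then for every $x\in X_V[\hat x]$: $$\sum_{pq\in\delta(U)}c_{pq}\big(x_{pq}-\tau(x)_{pq}\big)\le\sum_{pq\in P'_{01}}c^-_{pq}+\sum_{pq\in P'_{10}}c^+_{pq}.$$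
   Context: For a finite set $W$, $P_W=\{pq\in W^2\mid p\neq q\}$ and $X_W$ is the set of $x\in\{0,1\}^{P_W}$ with $x_{pq}+x_{qr}-x_{pr}\le1$ for all pairwise distinct $p,q,r\in W$. A partial function $\tilde x$ on $P_W$ is a map from $\operatorname{dom}(\tilde x)\subseteq P_W$ to $\{0,1\}$, $\tilde x^{-1}(b)$ the pairs mapped to $b$, $X_W[\tilde x]=\{x\in X_W\mid x_{pq}=\tilde x_{pq}\ \forall pq\in\operatorname{dom}(\tilde x)\}$; convention $\tilde x_{aa}=1$, $x_{aa}=1$, $y_{aa}=1$ for all $a$. A pair is decided if it has the same value in all completions; $\tilde x$ is maximally specific if $X_W[\tilde x]\ne\emptyset$ and the decided pairs are exactly $\operatorname{dom}(\tilde x)$. $\hat x|_{P_U}$ has domain $\operatorname{dom}(\hat x)\cap P_U$. $\delta(U)=(U\times(V\setminus U))\cup((V\setminus U)\times U)$. For $y\in X_U[\hat x']$ and $x\in X_V[\hat x]$: $\tau^y_{\mathrm{out}}(x)_{pq}$ equals $y_{pq}$ on $P_U$; $0$ on $U\times(V\setminus U)$; on $(V\setminus U)\times U$, $1$ if $\exists r\in U: x_{pr}=1\wedge y_{rq}=1$ and $0$ otherwise; $x_{pq}$ on $P_{V\setminus U}$. $\tau^y_{\mathrm{in}}(x)_{pq}$ equals $y_{pq}$ on $P_U$; $0$ on $(V\setminus U)\times U$; on $U\times(V\setminus U)$, $1$ if $\exists r\in U: y_{pr}=1\wedge x_{rq}=1$ and $0$ otherwise; $x_{pq}$ on $P_{V\setminus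 U}$. $\tau^y_{\mathrm{bd}}(x)_{pq}$ equals $y_{pq}$ on $P_U$; $0$ on $\delta(U)$; $x_{pq}$ on $P_{V\setminus U}$. Sets: for $\tau^y_{\mathrm{out}}$: $P'_{01}=\{pq\in(V\setminus U)\times U\mid\exists r\in U:\hat x_{pr}\ne0\wedge y_{rq}=1\}\setminus\hat x^{-1}(1)$, $P'_{10}=(U\times(V\setminus U))\setminus\hat x^{-1}(0)$; for $\tau^y_{\mathrm{in}}$: $P'_{01}=\{pq\in U\times(V\setminus U)\mid\exists r\in U: y_{pr}=1\wedge\hat x_{rq}\ne0\}\setminus\hat x^{-1}(1)$, $P'_{10}=((V\setminus U)\times U)\setminus\hat x^{-1}(0)$; for $\tau^y_{\mathrm{bd}}$: $P'_{01}=\emptyset$, $P'_{10}=\delta(U)\setminus\hat x^{-1}(0)$. For real $a$: $a^+=\max(a,0)$, $a^-=\max(-a,0)$. *)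

theory Defs
  imports Main "HOL-Library.Extended_Real"
begin

definition PW :: "'a set \<Rightarrow> ('a \<times> 'a) set" where
  "PW W = {(p, q). p \<in> W \<and> q \<in> W \<and> p \<noteq> q}"

definition XW :: "'a set \<Rightarrow> (('a \<times> 'a) \<Rightarrow> real) set" where
  "XW W = {x. (\<forall>e\<in>PW W. x e \<in> {0, 1}) \<and> (\<forall>e. e \<notin> PW W \<longrightarrow> x e = 0) \<and>
     (\<forall>p\<in>W. \<forall>q\<in>W. \<forall>r\<in>W. p \<noteq> q \<and> q \<noteq> r \<and> p \<noteq> r \<longrightarrow>
        x (p, q) + x (q, r) - x (p, r) \<le> 1)}"

definition XWp :: "'a set \<Rightarrow> (('a \<times> 'a) \<rightharpoonup> real) \<Rightarrow> (('a \<times> 'a) \<Rightarrow> real) set" where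
  "XWp W xt = {x \<in> XW W. \<forall>e \<in> dom xt. xt e = Some (x e)}"

definition decided :: "'a set \<Rightarrow> (('a \<times> 'a) \<rightharpoonup> real) \<Rightarrow> ('a \<times> 'a) \<Rightarrow> bool" where
  "decided W xt e \<longleftrightarrow> (\<forall>x\<in>XWp W xt. \<forall>x'\<in>XWp W xt. x e = x' e)"

definition maximally_specific :: "'a set \<Rightarrow> (('a \<times> 'a) \<rightharpoonup> real) \<Rightarrow> bool" where
  "maximally_specific W xt \<longleftrightarrow> XWp W xt \<noteq> {} \<and> {e \<in> PW W. decided W xt e} = dom xt"

definition delta :: "'a set \<Rightarrow> 'a set \<Rightarrow> ('a \<times> 'a) set" where
  "delta V U = (U \<times> (V - U)) \<union> ((V - U) \<times> U)"

datatype tau_kind = Out | In | Bd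

text \<open>The maps tau^y_out, tau^y_in, tau^y_bd on X_V (values on P_V, 0 elsewhere).
  The convention y_aa = 1 is made explicit through the disjuncts r = q / r = p.\<close>
definition tau :: "tau_kind \<Rightarrow> 'a set \<Rightarrow> 'a set \<Rightarrow> (('a \<times> 'a) \<Rightarrow> real)
    \<Rightarrow> (('a \<times> 'a) \<Rightarrow> real) \<Rightarrow> ('a \<times> 'a) \<Rightarrow> real" where
  "tau k V U y x e = (case e of (p, q) \<Rightarrow>
     if (p, q) \<notin> PW V then 0
     else if p \<in> U \<and> q \<in> U then y (p, q)
     else if p \<notin> U \<and> q \<notin> U then x (p, q)
     else if p \<in> U then
       (case k of
          Out \<Rightarrow> 0
        | In \<Rightarrow> (if \<exists>r\<in>U. (r = p \<or> y (p, r) = 1) \<and> x (r, q) = 1 then 1 else 0)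
        | Bd \<Rightarrow> 0)
     else
       (case k of
          Out \<Rightarrow> (if \<exists>r\<in>U. x (p, r) = 1 \<and> (r = q \<or> y (r, q) = 1) then 1 else 0)
        | In \<Rightarrow> 0
        | Bd \<Rightarrow> 0))"

definition P01 :: "tau_kind \<Rightarrow> 'a set \<Rightarrow> 'a set \<Rightarrow> (('a \<times> 'a) \<rightharpoonup> real)
    \<Rightarrow> (('a \<times> 'a) \<Rightarrow> real) \<Rightarrow> ('a \<times> 'a) set" where
  "P01 k V U xh y = (case k of
      Out \<Rightarrow> {(p, q) \<in> (V - U) \<times> U. \<exists>r\<in>U. xh (p, r) \<noteq> Some 0 \<and> (r = q \<or> y (r, q) = 1)}
               - {e. xh e = Some 1}
    | In \<Rightarrow> {(p, q) \<in> U \<times> (V - U). \<exists>r\<in>U. (r = p \<or> y (p, r) = 1) \<and> xh (r, q) \<noteq> Some 0}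
               - {e. xh e = Some 1}
    | Bd \<Rightarrow> {})"

definition P10 :: "tau_kind \<Rightarrow> 'a set \<Rightarrow> 'a set \<Rightarrow> (('a \<times> 'a) \<rightharpoonup> real) \<Rightarrow> ('a \<times> 'a) set" where
  "P10 k V U xh = (case k of
      Out \<Rightarrow> (U \<times> (V - U)) - {e. xh e = Some 0}
    | In \<Rightarrow> ((V - U) \<times> U) - {e. xh e = Some 0}
    | Bd \<Rightarrow> delta V U - {e. xh e = Some 0})"

definition yplus :: "'a set \<Rightarrow> (('a \<times> 'a) \<rightharpoonup> real) \<Rightarrow> (('a \<times> 'a) \<Rightarrow> real)
    \<Rightarrow> ('a \<times> 'a) \<Rightarrow> real" where
  "yplus U xh' c e = (if e \<notin> PW U then 0
      else (case xh' e of None \<Rightarrow> (if c e \<ge> 0 then 1 else 0) | Some v \<Rightarrow> v))"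

definition pos_part :: "real \<Rightarrow> real" where "pos_part a = max a 0"
definition neg_part :: "real \<Rightarrow> real" where "neg_part a = max (- a) 0"

end

theory Submission
  imports Defs
begin

text \<open>The inequality holds term by term on \<open>\<delta>(U)\<close>, for any \<open>y\<close>. Both \<open>x\<^sub>e\<close> and
  \<open>\<tau>(x)\<^sub>e\<close> lie in \<open>{0,1}\<close>, so the term \<open>c\<^sub>e (x\<^sub>e - \<tau>(x)\<^sub>e)\<close> vanishes unless they
  differ. If \<open>\<tau>\<close> lowers \<open>x\<^sub>e\<close> from 1 to 0, then \<open>x\<^sub>e = 1\<close> forces \<open>xh e \<noteq> Some 0\<close>, and
  \<open>e\<close> lies on the side of \<open>\<delta>(U)\<close> that \<open>\<tau>\<close> sets to zero (on the other side \<open>r = q\<close>,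
  resp. \<open>r = p\<close>, witnesses \<open>\<tau>(x)\<^sub>e = 1\<close>); so \<open>e \<in> P'\<^sub>1\<^sub>0\<close> and the term is at
  most \<open>c\<^sub>e\<^sup>+\<close>. If \<open>\<tau>\<close> raises \<open>x\<^sub>e\<close> from 0 to 1, then \<open>xh e \<noteq> Some 1\<close>, and the
  witness \<open>r\<close> of \<open>\<tau>(x)\<^sub>e = 1\<close> comes with an entry of \<open>x\<close> equal to 1, which
  therefore is not fixed to 0 by \<open>xh\<close>; so \<open>e \<in> P'\<^sub>0\<^sub>1\<close> and the term is at most
  \<open>c\<^sub>e\<^sup>-\<close>.\<close>

lemma XWp_fixed_value:
  assumes "x \<in> XWp V xh" and "xh e = Some v"
  shows "x e = v"
proof -
  have "e \<in> dom xh"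
    using assms(2) by auto
  then have "xh e = Some (x e)"
    using assms(1) unfolding XWp_def by blast
  with assms(2) show ?thesis by simp
qed

lemma XWp_support:
  assumes "x \<in> XWp V xh" and "x e \<noteq> 0"
  shows "e \<in> PW V"
  using assms unfolding XWp_def XW_def by blast

lemma XWp_binary:
  assumes "x \<in> XWp V xh"
  shows "x e \<in> {0, 1}"
  using assms unfolding XWp_def XW_def by (cases e) auto

lemma tau_delta_binary:
  assumes "e \<in> delta V U"
  shows "tau k V U y x e \<in> {0, 1}"
  using assms unfolding delta_def tau_def by (cases e; cases k) auto

lemma P01_subset_delta: "P01 k V U xh y \<subseteq> delta V U"
  unfolding P01_def delta_def by (cases k) auto

lemma P10_subset_delta: "P10 k V U xh \<subseteq> delta V U"
  unfolding P10_def delta_def by (cases k) auto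

lemma tau_lowers_only_on_P10:
  assumes x: "x \<in> XWp V xh" and e: "e \<in> delta V U"
    and "x e = 1" and "tau k V U y x e = 0"
  shows "e \<in> P10 k V U xh"
proof -
  obtain p q where pq: "e = (p, q)" by (cases e)
  have not_fixed_0: "xh e \<noteq> Some 0"
    using XWp_fixed_value[OF x, of e 0] \<open>x e = 1\<close> by auto
  have "e \<in> PW V"
    using XWp_support[OF x] \<open>x e = 1\<close> by simp
  show ?thesis
  proof (cases k)
    case Out
    have "p \<in> U"
    proof (rule ccontr)
      assume "p \<notin> U"
      moreover have "\<exists>r\<in>U. x (p, r) = 1 \<and> (r = q \<or> y (r, q) = 1)"
        using e \<open>p \<notin> U\<close> \<open>x e = 1\<close> unfolding delta_def pq by auto
      ultimately have "tau k V U y x e = 1"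
        using Out e \<open>e \<in> PW V\<close> unfolding tau_def delta_def pq by auto
      with assms(4) show False by simp
    qed
    with Out e not_fixed_0 show ?thesis
      unfolding P10_def delta_def pq by auto
  next
    case In
    have "q \<in> U"
    proof (rule ccontr)
      assume "q \<notin> U"
      moreover have "\<exists>r\<in>U. (r = p \<or> y (p, r) = 1) \<and> x (r, q) = 1"
        using e \<open>q \<notin> U\<close> \<open>x e = 1\<close> unfolding delta_def pq by auto
      ultimately have "tau k V U y x e = 1"
        using In e \<open>e \<in> PW V\<close> unfolding tau_def delta_def pq by auto
      with assms(4) show False by simp
    qed
    with In e not_fixed_0 show ?thesis
      unfolding P10_def delta_def pq by auto
  next
    case Bd
    with e not_fixed_0 show ?thesis
      unfolding P10_def by auto
  qed
qed

lemma tau_raises_only_on_P01: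
  assumes x: "x \<in> XWp V xh" and e: "e \<in> delta V U"
    and "x e = 0" and "tau k V U y x e = 1"
  shows "e \<in> P01 k V U xh y"
proof -
  obtain p q where pq: "e = (p, q)" by (cases e)
  have fixed_1: "xh e \<noteq> Some 1"
    using XWp_fixed_value[OF x, of e 1] \<open>x e = 0\<close> by auto
  have one_not_fixed_0: "xh d \<noteq> Some 0" if "x d = 1" for d
    using XWp_fixed_value[OF x, of d 0] that by auto
  show ?thesis
  proof (cases k)
    case Out
    with e assms(4) obtain r where "r \<in> U" "x (p, r) = 1" "r = q \<or> y (r, q) = 1"
      "p \<in> V - U" "q \<in> U"
      unfolding tau_def delta_def pq by (auto split: if_splits)
    with Out fixed_1 one_not_fixed_0 show ?thesis
      unfolding P01_def pq by auto
  next
    case In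
    with e assms(4) obtain r where "r \<in> U" "x (r, q) = 1" "r = p \<or> y (p, r) = 1"
      "p \<in> U" "q \<in> V - U"
      unfolding tau_def delta_def pq by (auto split: if_splits)
    with In fixed_1 one_not_fixed_0 show ?thesis
      unfolding P01_def pq by auto
  next
    case Bd
    with e assms(4) show ?thesis
      unfolding tau_def delta_def pq by (auto split: if_splits)
  qed
qed

lemma mult_binary_diff_le:
  fixes a b c :: real
  assumes "a \<in> {0, 1}" and "b \<in> {0, 1}"
  shows "c * (a - b) \<le> (if a = 0 \<and> b = 1 then neg_part c else 0)
                      + (if a = 1 \<and> b = 0 then pos_part c else 0)"
  using assms unfolding neg_part_def pos_part_def by auto

lemma sum_le_restricted_sums:
  fixes f g h :: "'a \<Rightarrow> real"
  assumes "finite D" and "A \<subseteq> D" and "B \<subseteq> D"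
    and "\<And>e. e \<in> D \<Longrightarrow> f e \<le> (if e \<in> A then g e else 0) + (if e \<in> B then h e else 0)"
  shows "sum f D \<le> sum g A + sum h B"
proof -
  have "sum f D \<le> (\<Sum>e\<in>D. (if e \<in> A then g e else 0) + (if e \<in> B then h e else 0))"
    using assms(4) by (rule sum_mono)
  also have "\<dots> = sum g (D \<inter> A) + sum h (D \<inter> B)"
    by (simp add: sum.distrib sum.inter_restrict[OF assms(1)])
  also have "\<dots> = sum g A + sum h B"
    using assms(2,3) by (simp add: Int_absorb1)
  finally show ?thesis .
qed

lemma delta_term_le:
  assumes x: "x \<in> XWp V xh" and e: "e \<in> delta V U"
  shows "c e * (x e - tau k V U y x e)
    \<le> (if e \<in> P01 k V U xh y then neg_part (c e) else 0)
      + (if e \<in> P10 k V U xh then pos_part (c e) else 0)"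
proof -
  let ?t = "tau k V U y x e"
  have "c e * (x e - ?t)
      \<le> (if x e = 0 \<and> ?t = 1 then neg_part (c e) else 0)
        + (if x e = 1 \<and> ?t = 0 then pos_part (c e) else 0)"
    using XWp_binary[OF x] tau_delta_binary[OF e] by (rule mult_binary_diff_le)
  also have "\<dots> \<le> (if e \<in> P01 k V U xh y then neg_part (c e) else 0)
      + (if e \<in> P10 k V U xh then pos_part (c e) else 0)"
    using tau_raises_only_on_P01[OF x e] tau_lowers_only_on_P10[OF x e]
    by (intro add_mono) (auto simp: neg_part_def pos_part_def)
  finally show ?thesis .
qed

theorem corollary7p6:
  fixes V U :: "'a set" and c :: "('a \<times> 'a) \<Rightarrow> real"
    and xh :: "('a \<times> 'a) \<rightharpoonup> real" and i j :: 'a and k :: tau_kind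
  assumes "finite V" and "V \<noteq> {}"
    and "maximally_specific V xh"
    and "U \<subseteq> V"
    and "(i, j) \<in> PW V - dom xh"
    and "yplus U (xh |` PW U) c \<in> XWp U (xh |` PW U)"
  shows "\<forall>x \<in> XWp V xh.
      (\<Sum>e\<in>delta V U. c e * (x e - tau k V U (yplus U (xh |` PW U) c) x e))
        \<le> (\<Sum>e\<in>P01 k V U xh (yplus U (xh |` PW U) c). neg_part (c e))
          + (\<Sum>e\<in>P10 k V U xh. pos_part (c e))"
proof
  fix x assume x: "x \<in> XWp V xh"
  have "finite (delta V U)"
    using assms(1,4) finite_subset unfolding delta_def by blast
  then show "(\<Sum>e\<in>delta V U. c e * (x e - tau k V U (yplus U (xh |` PW U) c) x e))
      \<le> (\<Sum>e\<in>P01 k V U xh (yplus U (xh |` PW U) c). neg_part (c e))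
        + (\<Sum>e\<in>P10 k V U xh. pos_part (c e))"
    by (rule sum_le_restricted_sums[OF _ P01_subset_delta P10_subset_delta delta_term_le[OF x]])
qed

end
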